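(* Let $q$ be a prime power, $1\le s<t$ integers, $\{u_1,\dots,u_t\}$ an $\mathbb{F}_q$-basis of $\mathbb{F}_{q^t}$, $W$ an arbitrary $\mathbb{F}_q$-subspace of $\mathbb{F}_{q^t}$ of dimension $s$, $A\subseteq\mathbb{F}_{q^t}$ and $\alpha^*\in A$. Let $L_W(x)=\prod_{w\in W}(x-w)$ and $g_i(x)=L_W\big(u_i(x-\alpha^* )\big)/(x-\alpha^* )$ for $i=1,\dots,t$. Then for every $\alpha\in A\setminus\{\alpha^*\}$, the set $\{g_1(\alpha),\dots,g_t(\alpha)\}$ has rank at most $t-s$ over $\mathbb{F}_q$. *)

theory Defs
  imports "HOL-Number_Theory.Prime_Powers"
begin

text \<open>A subfield K of an ambient field (the subfield F_q inside F_{q^t}).\<close>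
definition is_subfield :: "'a::field set \<Rightarrow> bool" where
  "is_subfield K \<longleftrightarrow> 0 \<in> K \<and> 1 \<in> K \<and>
     (\<forall>x\<in>K. \<forall>y\<in>K. x + y \<in> K \<and> x * y \<in> K) \<and>
     (\<forall>x\<in>K. - x \<in> K) \<and> (\<forall>x\<in>K. x \<noteq> 0 \<longrightarrow> inverse x \<in> K)"

definition is_Ksubspace :: "'a::field set \<Rightarrow> 'a set \<Rightarrow> bool" where
  "is_Ksubspace K V \<longleftrightarrow> 0 \<in> V \<and> (\<forall>x\<in>V. \<forall>y\<in>V. x + y \<in> V) \<and>
     (\<forall>c\<in>K. \<forall>x\<in>V. c * x \<in> V)"

definition Kspan :: "'a::field set \<Rightarrow> 'a set \<Rightarrow> 'a set" where
  "Kspan K B = {y. \<exists>f. (\<forall>v\<in>B. f v \<in> K) \<and> y = (\<Sum>v\<in>B. f v * v)}"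

definition Kindep :: "'a::field set \<Rightarrow> 'a set \<Rightarrow> bool" where
  "Kindep K B \<longleftrightarrow> finite B \<and> (\<forall>f. (\<forall>v\<in>B. f v \<in> K) \<longrightarrow> (\<Sum>v\<in>B. f v * v) = 0 \<longrightarrow> (\<forall>v\<in>B. f v = 0))"

text \<open>Rank over K of a set of elements: maximal size of a K-independent subset
  (= K-dimension of its K-span; for a subspace, its K-dimension).\<close>
definition Krank :: "'a::field set \<Rightarrow> 'a set \<Rightarrow> nat" where
  "Krank K S = Max (card ` {B. B \<subseteq> S \<and> Kindep K B})"

end

theory Submission
  imports Defs "HOL-Computational_Algebra.Polynomial" "HOL-Library.FuncSet"
begin

text \<open>Since \<open>L\<^sub>W\<close> is additive and \<open>\<F>\<^sub>q\<close>-linear, so is \<open>\<phi>(x) = L\<^sub>W(x(\<alpha> - \<alpha>\<^sup>*)) / (\<alpha> - \<alpha>\<^sup>*)\<close>,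
  and \<open>g\<^sub>i(\<alpha>) = \<phi>(u\<^sub>i)\<close>. The kernel of \<open>\<phi>\<close> is \<open>W / (\<alpha> - \<alpha>\<^sup>*)\<close>, with at least \<open>q\<^sup>s\<close> elements,
  so the image of \<open>\<phi>\<close> is a subspace with at most \<open>q\<^sup>t\<^sup>-\<^sup>s\<close> elements; any independent subset of
  it, in particular of \<open>{g\<^sub>i(\<alpha>)}\<close>, therefore has at most \<open>t - s\<close> elements.\<close>

lemma subfield_diff:
  assumes "is_subfield K" "a \<in> K" "b \<in> K"
  shows "a - b \<in> K"
  using assms unfolding is_subfield_def by (metis diff_conv_add_uminus)

lemma Ksubspace_uminus:
  assumes "is_subfield K" "is_Ksubspace K W" "w \<in> W"
  shows "- w \<in> W"
proof -
  have "-1 \<in> K" using assms(1) unfolding is_subfield_def by blast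
  hence "(-1) * w \<in> W" using assms(2,3) unfolding is_Ksubspace_def by blast
  thus ?thesis by simp
qed

lemma Ksubspace_diff:
  assumes "is_subfield K" "is_Ksubspace K W" "v \<in> W" "w \<in> W"
  shows "v - w \<in> W"
  using Ksubspace_uminus[OF assms(1,2,4)] assms(2,3)
  unfolding is_Ksubspace_def by (metis diff_conv_add_uminus)

lemma Ksubspace_sum:
  assumes "is_Ksubspace K V" "\<And>v. v \<in> B \<Longrightarrow> h v \<in> V"
  shows "sum h B \<in> V"
  using assms(2)
proof (induction B rule: infinite_finite_induct)
  case (insert x F)
  then show ?case using assms(1) unfolding is_Ksubspace_def by simp
qed (use assms(1) in \<open>auto simp: is_Ksubspace_def\<close>)

lemma Ksubspace_add_image:
  assumes "is_subfield K" "is_Ksubspace K W" "w0 \<in> W"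
  shows "(\<lambda>w. w0 + w) ` W = W"
proof
  show "(\<lambda>w. w0 + w) ` W \<subseteq> W" using assms(2,3) unfolding is_Ksubspace_def by auto
  show "W \<subseteq> (\<lambda>w. w0 + w) ` W"
  proof
    fix x assume "x \<in> W"
    hence "x - w0 \<in> W" using Ksubspace_diff[OF assms(1,2) _ assms(3)] by blast
    thus "x \<in> (\<lambda>w. w0 + w) ` W" by (intro image_eqI[of _ _ "x - w0"]) auto
  qed
qed

lemma Ksubspace_mult_image:
  assumes "is_subfield K" "is_Ksubspace K W" "c \<in> K" "c \<noteq> 0"
  shows "(\<lambda>w. c * w) ` W = W"
proof
  show "(\<lambda>w. c * w) ` W \<subseteq> W" using assms(2,3) unfolding is_Ksubspace_def by auto
  show "W \<subseteq> (\<lambda>w. c * w) ` W"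
  proof
    fix x assume "x \<in> W"
    moreover have "inverse c \<in> K" using assms(1,3,4) unfolding is_subfield_def by blast
    ultimately have "inverse c * x \<in> W" using assms(2) unfolding is_Ksubspace_def by blast
    thus "x \<in> (\<lambda>w. c * w) ` W" using assms(4) by (intro image_eqI[of _ _ "inverse c * x"]) auto
  qed
qed

lemma subfield_power_card_Ksubspace:
  assumes "is_subfield K" "is_Ksubspace K W" "finite W" "c \<in> K" "c \<noteq> 0"
  shows "c ^ card W = c"
proof -
  let ?P = "\<Prod>w\<in>W - {0}. w"
  have "(\<lambda>w. c * w) ` (W - {0}) = W - {0}"
    using Ksubspace_mult_image[OF assms(1,2,4,5)] assms(5)
    by (subst image_set_diff) (auto simp: inj_def)
  hence "?P = (\<Prod>w\<in>(\<lambda>w. c * w) ` (W - {0}). w)" by simp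
  also have "\<dots> = (\<Prod>w\<in>W - {0}. c * w)"
    using assms(5) by (subst prod.reindex) (auto simp: inj_on_def)
  also have "\<dots> = c ^ card (W - {0}) * ?P" by (simp add: prod.distrib)
  finally have "c ^ card (W - {0}) = 1" using assms(3) by (simp add: prod_zero_iff)
  moreover have "card W = Suc (card (W - {0}))"
    using assms(2,3) unfolding is_Ksubspace_def by (metis card_Suc_Diff1)
  ultimately show ?thesis by simp
qed

definition subspace_poly :: "'a::field set \<Rightarrow> 'a \<Rightarrow> 'a" where
  "subspace_poly W x = (\<Prod>w\<in>W. x - w)"

lemma subspace_poly_eq_0_iff:
  "finite W \<Longrightarrow> subspace_poly W x = 0 \<longleftrightarrow> x \<in> W"
  unfolding subspace_poly_def by (simp add: prod_zero_iff)

lemma subspace_poly_translate: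
  assumes "is_subfield K" "is_Ksubspace K W" "w0 \<in> W"
  shows "subspace_poly W (w0 + y) = subspace_poly W y"
proof -
  have "subspace_poly W (w0 + y) = (\<Prod>w\<in>(\<lambda>w. w0 + w) ` W. w0 + y - w)"
    unfolding subspace_poly_def Ksubspace_add_image[OF assms] ..
  also have "\<dots> = (\<Prod>w\<in>W. w0 + y - (w0 + w))" by (subst prod.reindex) (auto simp: inj_on_def)
  finally show ?thesis unfolding subspace_poly_def by simp
qed

text \<open>As polynomials in \<open>z\<close>, \<open>L\<^sub>W(z + y)\<close> and \<open>L\<^sub>W(z) + L\<^sub>W(y)\<close> are monic of degree \<open>|W|\<close>,
  so their difference has degree below \<open>|W|\<close>; by translation invariance it vanishes on \<open>W\<close>.\<close>

lemma subspace_poly_add: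
  assumes "is_subfield K" "is_Ksubspace K W" "finite W"
  shows "subspace_poly W (x + y) = subspace_poly W x + subspace_poly W y"
proof -
  define P where "P = (\<Prod>w\<in>W. [:-w, 1:])"
  define Q where "Q = (\<Prod>w\<in>W. [:y - w, 1:])"
  have W_ne: "card W \<ge> 1"
    using assms(2,3) unfolding is_Ksubspace_def by (metis One_nat_def Suc_leI card_gt_0_iff empty_iff)
  have deg: "degree P = card W" "degree Q = card W"
    unfolding P_def Q_def by (subst degree_prod_eq_sum_degree; simp)+
  have lead: "lead_coeff P = 1" "lead_coeff Q = 1"
    unfolding P_def Q_def by (subst lead_coeff_prod; simp)+
  have poly_P: "poly P z = subspace_poly W z" for z
    unfolding P_def subspace_poly_def by (simp add: poly_prod)
  have poly_Q: "poly Q z = subspace_poly W (z + y)" for z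
    unfolding Q_def subspace_poly_def by (simp add: poly_prod algebra_simps)
  have "Q = P + [:subspace_poly W y:]"
  proof (rule poly_eqI_degree_lead_coeff[of _ "card W" _ W])
    show "poly.coeff Q (card W) = poly.coeff (P + [:subspace_poly W y:]) (card W)"
      using lead deg W_ne by (cases "card W") (auto simp: coeff_pCons)
    show "degree (P + [:subspace_poly W y:]) \<le> card W"
      using deg by (intro degree_add_le) auto
    fix z assume "z \<in> W"
    then show "poly Q z = poly (P + [:subspace_poly W y:]) z"
      using subspace_poly_translate[OF assms(1,2)] subspace_poly_eq_0_iff[OF assms(3)]
      by (simp add: poly_P poly_Q)
  qed (use deg in auto)
  then have "poly Q x = poly P x + subspace_poly W y" by simp
  then show ?thesis by (simp add: poly_P poly_Q)
qed

lemma subspace_poly_mult: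
  assumes "is_subfield K" "is_Ksubspace K W" "finite W" "c \<in> K"
  shows "subspace_poly W (c * x) = c * subspace_poly W x"
proof (cases "c = 0")
  case True
  then show ?thesis
    using assms(2) subspace_poly_eq_0_iff[OF assms(3)] unfolding is_Ksubspace_def by simp
next
  case False
  have "subspace_poly W (c * x) = (\<Prod>w\<in>(\<lambda>w. c * w) ` W. c * x - w)"
    unfolding subspace_poly_def Ksubspace_mult_image[OF assms(1,2,4) False] ..
  also have "\<dots> = (\<Prod>w\<in>W. c * (x - w))"
    using False by (subst prod.reindex) (auto simp: inj_on_def algebra_simps)
  also have "\<dots> = c ^ card W * subspace_poly W x"
    unfolding subspace_poly_def by (simp add: prod.distrib)
  finally show ?thesis
    using subfield_power_card_Ksubspace[OF assms(1-4) False] by simp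
qed

lemma Ksubspace_range:
  assumes "\<And>x y. f (x + y) = f x + f y" "\<And>c x. c \<in> K \<Longrightarrow> f (c * x) = c * f x"
  shows "is_Ksubspace K (range f)"
  unfolding is_Ksubspace_def
proof (intro conjI ballI)
  have "f 0 = 0" using assms(1)[of 0 0] by (metis add_cancel_right_right)
  then show "0 \<in> range f" by (metis rangeI)
qed (auto simp flip: assms)

lemma card_range_mult_card_kernel:
  fixes f :: "'a::{ab_group_add,finite} \<Rightarrow> 'b::ab_group_add"
  assumes add: "\<And>x y. f (x + y) = f x + f y"
  shows "card (range f) * card {x. f x = 0} = card (UNIV :: 'a set)"
proof -
  have f_diff: "f (x - y) = f x - f y" for x y by (metis add diff_add_cancel eq_diff_eq)
  have fibre: "f -` {f x0} = (\<lambda>x. x0 + x) ` {x. f x = 0}" for x0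
  proof (rule set_eqI)
    fix x
    have "x \<in> f -` {f x0} \<longleftrightarrow> f (x - x0) = 0" by (simp add: f_diff)
    also have "\<dots> \<longleftrightarrow> x \<in> (\<lambda>x. x0 + x) ` {x. f x = 0}"
      by (auto intro: image_eqI[of _ _ "x - x0"])
    finally show "x \<in> f -` {f x0} \<longleftrightarrow> x \<in> (\<lambda>x. x0 + x) ` {x. f x = 0}" .
  qed
  have "(UNIV :: 'a set) = (\<Union>v\<in>range f. f -` {v})" by auto
  then have "card (UNIV :: 'a set) = card (\<Union>v\<in>range f. f -` {v})" by simp
  also have "\<dots> = (\<Sum>v\<in>range f. card (f -` {v}))" by (rule card_UN_disjoint) auto
  also have "\<dots> = (\<Sum>v\<in>range f. card {x. f x = 0})"
    by (intro sum.cong) (auto simp: fibre card_image)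
  finally show ?thesis by simp
qed

lemma card_mult_preimage:
  fixes c :: "'a::field"
  assumes "c \<noteq> 0"
  shows "card {x. x * c \<in> W} = card W"
proof -
  have "{x. x * c \<in> W} = (\<lambda>w. w / c) ` W"
  proof (intro set_eqI iffI)
    fix x assume "x \<in> {x. x * c \<in> W}"
    then show "x \<in> (\<lambda>w. w / c) ` W" using assms by (intro image_eqI[of _ _ "x * c"]) simp_all
  qed (use assms in auto)
  moreover have "inj_on (\<lambda>w. w / c) W" using assms by (auto simp: inj_on_def)
  ultimately show ?thesis by (simp add: card_image)
qed

lemma card_pow_le_of_Kindep:
  assumes "is_subfield K" "is_Ksubspace K V" "finite V" "B \<subseteq> V" "Kindep K B"
  shows "card K ^ card B \<le> card V"
proof -
  define g where "g f = (\<Sum>v\<in>B. f v * v)" for f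
  have "finite B" using assms(5) unfolding Kindep_def by blast
  have "inj_on g (B \<rightarrow>\<^sub>E K)"
  proof (rule inj_onI)
    fix f1 f2 assume f: "f1 \<in> B \<rightarrow>\<^sub>E K" "f2 \<in> B \<rightarrow>\<^sub>E K" and "g f1 = g f2"
    then have "(\<Sum>v\<in>B. (f1 v - f2 v) * v) = 0"
      unfolding g_def by (simp add: left_diff_distrib sum_subtractf)
    moreover have "\<forall>v\<in>B. f1 v - f2 v \<in> K" using f subfield_diff[OF assms(1)] by blast
    ultimately have "\<forall>v\<in>B. f1 v - f2 v = 0"
      using assms(5) unfolding Kindep_def by (auto dest: spec[where x = "\<lambda>v. f1 v - f2 v"])
    then show "f1 = f2" using f by (intro PiE_ext[OF f]) auto
  qed
  moreover have "g ` (B \<rightarrow>\<^sub>E K) \<subseteq> V"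
    using assms(2,4) unfolding g_def
    by (fastforce intro!: Ksubspace_sum[OF assms(2)] simp: is_Ksubspace_def PiE_iff)
  ultimately have "card (B \<rightarrow>\<^sub>E K) \<le> card V" by (metis assms(3) card_image card_mono)
  then show ?thesis using \<open>finite B\<close> by (simp add: card_PiE)
qed

lemma Krank_le:
  assumes "finite S" "\<And>B. B \<subseteq> S \<Longrightarrow> Kindep K B \<Longrightarrow> card B \<le> n"
  shows "Krank K S \<le> n"
  unfolding Krank_def
proof (rule Max.boundedI)
  show "finite (card ` {B. B \<subseteq> S \<and> Kindep K B})" using assms(1) by simp
  have "{} \<in> {B. B \<subseteq> S \<and> Kindep K B}" unfolding Kindep_def by simp
  then show "card ` {B. B \<subseteq> S \<and> Kindep K B} \<noteq> {}" by blast
qed (use assms(2) in auto)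

lemma Kindep_card_eq_Krank:
  assumes "finite S"
  obtains B where "B \<subseteq> S" "Kindep K B" "card B = Krank K S"
proof -
  let ?I = "{B. B \<subseteq> S \<and> Kindep K B}"
  have "finite ?I" using finite_Collect_subsets[OF assms] by (rule rev_finite_subset) blast
  moreover have "{} \<in> ?I" unfolding Kindep_def by simp
  ultimately have "Krank K S \<in> card ` ?I" unfolding Krank_def by (intro Max_in) auto
  then show ?thesis by (auto intro: that)
qed

lemma card_pow_Krank_le:
  assumes "is_subfield K" "is_Ksubspace K W" "finite W"
  shows "card K ^ Krank K W \<le> card W"
proof -
  obtain B where "B \<subseteq> W" "Kindep K B" "card B = Krank K W"
    using Kindep_card_eq_Krank[OF assms(3)] .
  then show ?thesis using card_pow_le_of_Kindep[OF assms, of B] by simp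
qed

theorem lemma8:
  fixes q t s :: nat and K :: "'a::{field,finite} set"
    and u :: "nat \<Rightarrow> 'a" and W A :: "'a set" and \<alpha>star :: 'a
  assumes "primepow q"
    and "card (UNIV :: 'a set) = q ^ t"
    and "is_subfield K" and "card K = q"
    and "1 \<le> s" and "s < t"
    and "inj_on u {1..t}" and "Kindep K (u ` {1..t})" and "Kspan K (u ` {1..t}) = UNIV"
    and "is_Ksubspace K W" and "Krank K W = s"
    and "\<alpha>star \<in> A"
  shows "\<forall>\<alpha>\<in>A - {\<alpha>star}.
           Krank K ((\<lambda>i. (\<Prod>w\<in>W. u i * (\<alpha> - \<alpha>star) - w) / (\<alpha> - \<alpha>star)) ` {1..t}) \<le> t - s"
proof
  fix \<alpha> assume "\<alpha> \<in> A - {\<alpha>star}"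
  define \<beta> where "\<beta> = \<alpha> - \<alpha>star"
  have "\<beta> \<noteq> 0" using \<open>\<alpha> \<in> A - {\<alpha>star}\<close> unfolding \<beta>_def by auto
  define \<phi> where "\<phi> x = subspace_poly W (x * \<beta>) / \<beta>" for x
  have \<phi>_add: "\<phi> (x + y) = \<phi> x + \<phi> y" for x y
    unfolding \<phi>_def by (simp add: distrib_right subspace_poly_add[OF assms(3,10)] add_divide_distrib)
  have "is_Ksubspace K (range \<phi>)"
    by (rule Ksubspace_range[OF \<phi>_add])
      (simp add: \<phi>_def mult.assoc subspace_poly_mult[OF assms(3,10)])
  have "{x. \<phi> x = 0} = {x. x * \<beta> \<in> W}"
    using \<open>\<beta> \<noteq> 0\<close> subspace_poly_eq_0_iff[of W] by (simp add: \<phi>_def)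
  then have card_range: "card (range \<phi>) * card W = q ^ t"
    using card_range_mult_card_kernel[OF \<phi>_add] card_mult_preimage[OF \<open>\<beta> \<noteq> 0\<close>] assms(2) by simp
  have "q ^ s \<le> card W" using card_pow_Krank_le[OF assms(3,10)] assms(4,11) by simp
  have "q \<ge> 2" using primepow_gt_Suc_0[OF assms(1)] by simp
  let ?S = "(\<lambda>i. (\<Prod>w\<in>W. u i * (\<alpha> - \<alpha>star) - w) / (\<alpha> - \<alpha>star)) ` {1..t}"
  have "?S \<subseteq> range \<phi>" by (auto simp: \<phi>_def \<beta>_def subspace_poly_def)
  show "Krank K ?S \<le> t - s"
  proof (rule Krank_le)
    fix B assume "B \<subseteq> ?S" "Kindep K B"
    have "B \<subseteq> range \<phi>" using \<open>B \<subseteq> ?S\<close> \<open>?S \<subseteq> range \<phi>\<close> by (rule order.trans)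
    then have "card K ^ card B \<le> card (range \<phi>)"
      by (rule card_pow_le_of_Kindep[OF assms(3) \<open>is_Ksubspace K (range \<phi>)\<close> finite _ \<open>Kindep K B\<close>])
    then have "q ^ card B \<le> card (range \<phi>)" unfolding assms(4) .
    have "q ^ (card B + s) = q ^ card B * q ^ s" by (simp add: power_add)
    also have "\<dots> \<le> card (range \<phi>) * card W"
      using \<open>q ^ card B \<le> card (range \<phi>)\<close> \<open>q ^ s \<le> card W\<close> by (rule mult_le_mono)
    finally have "q ^ (card B + s) \<le> q ^ t" unfolding card_range .
    then have "card B + s \<le> t" by (rule power_le_imp_le_exp[rotated]) (use \<open>q \<ge> 2\<close> in simp)
    then show "card B \<le> t - s" by simp
  qed simp
qed

end
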